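(* Let $P$ be a definite logic program, let $p(t_1,\ldots,t_n)$ be an atom, let $X_1,\ldots,X_n$ be distinct fresh variables, and let $\mathcal{C}_0=\langle p(t_1,\ldots,t_n)_{id} \;]\![\; p(X_1,\ldots,X_n)_{id}\rangle$ be the corresponding initial concolic state. Let $\mathcal{C}_0\leadsto\mathcal{C}_1\leadsto\cdots\leadsto\mathcal{C}_m$, $m\geq 0$, be a finite (possibly incomplete) concolic execution for $\mathcal{C}_0$ in $P$. Then for every $i\in\{0,\ldots,m\}$ such that $\mathcal{C}_i$ has the form $\langle \mathcal{B}^{c}_{\delta}\mid S \;]\![\; \mathcal{D}^{c'}_{\theta}\mid S'\rangle$ (the clause labels $c,c'$ possibly absent), the following hold: $|S|=|S'|$; $\mathcal{D}\leqslant\mathcal{B}$; $c=c'$ (when these labels are present); and $p(X_1,\ldots,X_n)\theta\leqslant p(t_1,\ldots,t_n)\delta$.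
   Context: Programs are definite logic programs; every clause $c$ has a unique label $\ell(c)$. Goals are conjunctions of atoms (including the special atoms $\mathsf{true}$ and $\mathsf{fail}$). For syntactic objects $s_1,s_2$, $s_1\leqslant s_2$ ("$s_1$ is more general than $s_2$") means $s_1\theta=s_2$ for some substitution $\theta$. For an atom $A$, $\mathsf{clauses}(A,P)$ is the sequence (in program order) of renamed-apart clauses of $P$ whose heads unify with $A$. A concolic state has the form $\langle S\;]\![\; S'\rangle$ where $S$ (concrete part) and $S'$ (symbolic part) are sequences, separated by $\mid$, of goals each labeled with a substitution and possibly additionally with a program clause, written $\mathcal{B}_\delta$ or $\mathcal{B}^{c}_\delta$; $id$ is the identity substitution; $\textsc{success}_\delta$ and $\textsc{fail}_\delta$ denote final goals; $\epsilon$ is the empty sequence. The concolic transition relation $\leadsto$ is given by the rules: (success) $\langle \mathsf{true}_\delta\mid S\;]\![\;\mathsf{true}_\theta\mid S'\rangle\leadsto\langle\textsc{success}_\delta\;]\![\;\textsc{success}_\theta\rangle$. (failure) $\langle(\mathsf{fail},\mathcal{B})_\delta\;]\![\;(\mathsf{fail},\mathcal{B}')_\theta\rangle\leadsto\langle\textsc{fail}_\delta\;]\![\;\textsc{fail}_\theta\rangle$. (backtrack) if $S\neq\epsilon$: $\langle(\mathsf{fail},\mathcal{B})_\delta\mid S\;]\![\;(\mathsf{fail},\mathcal{B}')_\theta\mid S'\rangle\leadsto\langle S\;]\![\;S'\rangle$. (choice) if $\mathsf{clauses}(A,P)=c_1,\ldots,c_n$ with $n>0$: $\langle (A,\mathcal{B})_\delta\mid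 S\;]\![\;(A',\mathcal{B}')_\theta\mid S'\rangle\leadsto\langle (A,\mathcal{B})^{c_1}_\delta\mid\cdots\mid(A,\mathcal{B})^{c_n}_\delta\mid S\;]\![\;(A',\mathcal{B}')^{c_1}_\theta\mid\cdots\mid(A',\mathcal{B}')^{c_n}_\theta\mid S'\rangle$ (the step is labeled $c(\ell(c_1..c_n),\ell(d_1..d_k))$ where $d_1..d_k=\mathsf{clauses}(A',P)$). (choice_fail) if $\mathsf{clauses}(A,P)$ is empty: $\langle(A,\mathcal{B})_\delta\mid S\;]\![\;(A',\mathcal{B}')_\theta\mid S'\rangle\leadsto\langle(\mathsf{fail},\mathcal{B})_\delta\mid S\;]\![\;(\mathsf{fail},\mathcal{B}')_\theta\mid S'\rangle$. (unfold) if $\sigma=\mathrm{mgu}(A,H_1)$ and $\sigma'=\mathrm{mgu}(A',H_1)$: $\langle(A,\mathcal{B})^{H_1\leftarrow\mathcal{B}_1}_\delta\mid S\;]\![\;(A',\mathcal{B}')^{H_1\leftarrow\mathcal{B}_1}_\theta\mid S'\rangle\leadsto\langle(\mathcal{B}_1\sigma,\mathcal{B}\sigma)_{\delta\sigma}\mid S\;]\![\;(\mathcal{B}_1\sigma',\mathcal{B}'\sigma')_{\theta\sigma'}\mid S'\rangle$. *)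

theory Defs
  imports Main
begin

datatype ('f, 'v) trm = Var 'v | Fn 'f "('f, 'v) trm list"

text \<open>Atoms: user atoms p(t1,...,tn) and the special atom fail.
  The special atom true is the neutral element of conjunction and is
  represented by the empty goal.\<close>
datatype ('p, 'f, 'v) atm = Atm 'p "('f, 'v) trm list" | FailA

type_synonym ('p, 'f, 'v) goal = "('p, 'f, 'v) atm list"

datatype ('l, 'p, 'f, 'v) cl =
  Cl (lbl: 'l) (hd_pred: 'p) (hd_args: "('f, 'v) trm list") (cl_body: "('p, 'f, 'v) goal")

type_synonym ('l, 'p, 'f, 'v) prog = "('l, 'p, 'f, 'v) cl list"

definition cl_head :: "('l, 'p, 'f, 'v) cl \<Rightarrow> ('p, 'f, 'v) atm" where
  "cl_head c = Atm (hd_pred c) (hd_args c)"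

type_synonym ('f, 'v) subst = "'v \<Rightarrow> ('f, 'v) trm"

fun tsubst :: "('f, 'v) subst \<Rightarrow> ('f, 'v) trm \<Rightarrow> ('f, 'v) trm" where
  "tsubst \<sigma> (Var x) = \<sigma> x"
| "tsubst \<sigma> (Fn f ts) = Fn f (map (tsubst \<sigma>) ts)"

fun asubst :: "('f, 'v) subst \<Rightarrow> ('p, 'f, 'v) atm \<Rightarrow> ('p, 'f, 'v) atm" where
  "asubst \<sigma> (Atm p ts) = Atm p (map (tsubst \<sigma>) ts)"
| "asubst \<sigma> FailA = FailA"

definition gsubst :: "('f, 'v) subst \<Rightarrow> ('p, 'f, 'v) goal \<Rightarrow> ('p, 'f, 'v) goal" where
  "gsubst \<sigma> B = map (asubst \<sigma>) B"

fun clsubst :: "('f, 'v) subst \<Rightarrow> ('l, 'p, 'f, 'v) cl \<Rightarrow> ('l, 'p, 'f, 'v) cl" where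
  "clsubst \<sigma> (Cl l p us B) = Cl l p (map (tsubst \<sigma>) us) (gsubst \<sigma> B)"

text \<open>Composition: \<delta>\<sigma> means first \<delta> then \<sigma>.\<close>
definition scomp :: "('f, 'v) subst \<Rightarrow> ('f, 'v) subst \<Rightarrow> ('f, 'v) subst" (infixl "\<circ>\<^sub>s" 75) where
  "(\<delta> \<circ>\<^sub>s \<sigma>) x = tsubst \<sigma> (\<delta> x)"

definition atm_more_general :: "('p, 'f, 'v) atm \<Rightarrow> ('p, 'f, 'v) atm \<Rightarrow> bool" where
  "atm_more_general A1 A2 \<longleftrightarrow> (\<exists>\<theta>. asubst \<theta> A1 = A2)"

definition goal_more_general :: "('p, 'f, 'v) goal \<Rightarrow> ('p, 'f, 'v) goal \<Rightarrow> bool" where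
  "goal_more_general B1 B2 \<longleftrightarrow> (\<exists>\<theta>. gsubst \<theta> B1 = B2)"

fun tvars :: "('f, 'v) trm \<Rightarrow> 'v set" where
  "tvars (Var x) = {x}"
| "tvars (Fn f ts) = (\<Union>t \<in> set ts. tvars t)"

fun avars :: "('p, 'f, 'v) atm \<Rightarrow> 'v set" where
  "avars (Atm p ts) = (\<Union>t \<in> set ts. tvars t)"
| "avars FailA = {}"

definition gvars :: "('p, 'f, 'v) goal \<Rightarrow> 'v set" where
  "gvars B = (\<Union>A \<in> set B. avars A)"

definition clvars :: "('l, 'p, 'f, 'v) cl \<Rightarrow> 'v set" where
  "clvars c = (\<Union>t \<in> set (hd_args c). tvars t) \<union> gvars (cl_body c)"

definition sdom :: "('f, 'v) subst \<Rightarrow> 'v set" where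
  "sdom \<sigma> = {x. \<sigma> x \<noteq> Var x}"

definition svars :: "('f, 'v) subst \<Rightarrow> 'v set" where
  "svars \<sigma> = sdom \<sigma> \<union> (\<Union>x \<in> sdom \<sigma>. tvars (\<sigma> x))"

definition variant :: "('l, 'p, 'f, 'v) cl \<Rightarrow> ('l, 'p, 'f, 'v) cl \<Rightarrow> bool" where
  "variant c d \<longleftrightarrow> (\<exists>\<rho> :: 'v \<Rightarrow> 'v. bij \<rho> \<and> d = clsubst (Var \<circ> \<rho>) c)"

definition unifier :: "('f, 'v) subst \<Rightarrow> ('p, 'f, 'v) atm \<Rightarrow> ('p, 'f, 'v) atm \<Rightarrow> bool" where
  "unifier \<sigma> A B \<longleftrightarrow> asubst \<sigma> A = asubst \<sigma> B"

definition unifiable :: "('p, 'f, 'v) atm \<Rightarrow> ('p, 'f, 'v) atm \<Rightarrow> bool" where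
  "unifiable A B \<longleftrightarrow> (\<exists>\<sigma>. unifier \<sigma> A B)"

definition is_mgu :: "('f, 'v) subst \<Rightarrow> ('p, 'f, 'v) atm \<Rightarrow> ('p, 'f, 'v) atm \<Rightarrow> bool" where
  "is_mgu \<sigma> A B \<longleftrightarrow> unifier \<sigma> A B \<and> (\<forall>\<tau>. unifier \<tau> A B \<longrightarrow> (\<exists>\<gamma>. \<tau> = \<sigma> \<circ>\<^sub>s \<gamma>))"

text \<open>clauses(A,P) relative to a set V of variables to avoid: the program
  clauses, renamed apart (from V and from each other), kept in program order,
  filtered to those whose head unifies with A.\<close>
definition clauses_of ::
  "('l, 'p, 'f, 'v) prog \<Rightarrow> 'v set \<Rightarrow> ('p, 'f, 'v) atm \<Rightarrow> ('l, 'p, 'f, 'v) cl list \<Rightarrow> bool" where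
  "clauses_of P V A cs \<longleftrightarrow>
     (\<exists>ds. list_all2 variant P ds
        \<and> (\<forall>d \<in> set ds. clvars d \<inter> V = {})
        \<and> (\<forall>i j. i < length ds \<longrightarrow> j < length ds \<longrightarrow> i \<noteq> j \<longrightarrow> clvars (ds ! i) \<inter> clvars (ds ! j) = {})
        \<and> cs = filter (\<lambda>d. unifiable A (cl_head d)) ds)"

text \<open>Goal items: B_\<delta> or B^c_\<delta> (G B \<delta> None / G B \<delta> (Some c)), SUCCESS_\<delta>, FAIL_\<delta>.\<close>
datatype ('l, 'p, 'f, 'v) gitem =
    G "('p, 'f, 'v) goal" "('f, 'v) subst" "('l, 'p, 'f, 'v) cl option"
  | Succ "('f, 'v) subst"
  | FailF "('f, 'v) subst"

text \<open>A concolic state: (concrete part S, symbolic part S').\<close>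
type_synonym ('l, 'p, 'f, 'v) cstate = "('l, 'p, 'f, 'v) gitem list \<times> ('l, 'p, 'f, 'v) gitem list"

fun gi_vars :: "('l, 'p, 'f, 'v) gitem \<Rightarrow> 'v set" where
  "gi_vars (G B \<delta> c) = gvars B \<union> svars \<delta> \<union> (case c of None \<Rightarrow> {} | Some d \<Rightarrow> clvars d)"
| "gi_vars (Succ \<delta>) = svars \<delta>"
| "gi_vars (FailF \<delta>) = svars \<delta>"

definition st_vars :: "('l, 'p, 'f, 'v) cstate \<Rightarrow> 'v set" where
  "st_vars C = (\<Union>g \<in> set (fst C). gi_vars g) \<union> (\<Union>g \<in> set (snd C). gi_vars g)"

text \<open>Concolic transition relation; V is the set of variables the renamed
  clauses must avoid (all variables used so far in the execution).\<close>
inductive cstep ::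
  "('l, 'p, 'f, 'v) prog \<Rightarrow> 'v set \<Rightarrow> ('l, 'p, 'f, 'v) cstate \<Rightarrow> ('l, 'p, 'f, 'v) cstate \<Rightarrow> bool"
  for P :: "('l, 'p, 'f, 'v) prog" and V :: "'v set"
where
  success:
    "cstep P V (G [] \<delta> None # S, G [] \<theta> None # S') ([Succ \<delta>], [Succ \<theta>])"
| failure:
    "cstep P V ([G (FailA # B) \<delta> None], [G (FailA # B') \<theta> None]) ([FailF \<delta>], [FailF \<theta>])"
| backtrack:
    "S \<noteq> [] \<Longrightarrow>
     cstep P V (G (FailA # B) \<delta> None # S, G (FailA # B') \<theta> None # S') (S, S')"
| choice:
    "A = Atm p ts \<Longrightarrow> clauses_of P V A cs \<Longrightarrow> cs \<noteq> [] \<Longrightarrow>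
     cstep P V (G (A # B) \<delta> None # S, G (A' # B') \<theta> None # S')
       (map (\<lambda>c. G (A # B) \<delta> (Some c)) cs @ S, map (\<lambda>c. G (A' # B') \<theta> (Some c)) cs @ S')"
| choice_fail:
    "A = Atm p ts \<Longrightarrow> clauses_of P V A [] \<Longrightarrow>
     cstep P V (G (A # B) \<delta> None # S, G (A' # B') \<theta> None # S')
       (G (FailA # B) \<delta> None # S, G (FailA # B') \<theta> None # S')"
| unfold:
    "is_mgu \<sigma> A (cl_head c) \<Longrightarrow> is_mgu \<sigma>' A' (cl_head c) \<Longrightarrow>
     cstep P V (G (A # B) \<delta> (Some c) # S, G (A' # B') \<theta> (Some c) # S')
       (G (gsubst \<sigma> (cl_body c @ B)) (\<delta> \<circ>\<^sub>s \<sigma>) None # S,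
        G (gsubst \<sigma>' (cl_body c @ B')) (\<theta> \<circ>\<^sub>s \<sigma>') None # S')"

definition init_state :: "'p \<Rightarrow> ('f, 'v) trm list \<Rightarrow> 'v list \<Rightarrow> ('l, 'p, 'f, 'v) cstate" where
  "init_state p ts xs = ([G [Atm p ts] Var None], [G [Atm p (map Var xs)] Var None])"

text \<open>A finite concolic execution C_0 ~> ... ~> C_m given as a nonempty list;
  renamed clauses at step i avoid all variables of the initial atoms and of C_0..C_i.\<close>
definition cexec ::
  "('l, 'p, 'f, 'v) prog \<Rightarrow> 'v set \<Rightarrow> ('l, 'p, 'f, 'v) cstate list \<Rightarrow> bool" where
  "cexec P V0 Cs \<longleftrightarrow> Cs \<noteq> [] \<and>
     (\<forall>i. Suc i < length Cs \<longrightarrow>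
        cstep P (V0 \<union> (\<Union>j \<le> i. st_vars (Cs ! j))) (Cs ! i) (Cs ! Suc i))"

end

theory Submission
  imports Defs
begin

text \<open>The symbolic state stays a generalisation of the concrete one, witnessed by a single
  substitution that maps the symbolic goal to the concrete goal and, simultaneously, the
  symbolic instance of p(X1,...,Xn) to the concrete instance of p(t1,...,tn). At an unfold step both sides are resolved against the same renamed
  clause, whose variables are fresh for the symbolic side; the witness can therefore be taken
  to be the identity on the clause, and the standard lifting argument for most general
  unifiers turns it into a witness for the resolvents.\<close>

lemma tsubst_scomp: "tsubst (\<sigma> \<circ>\<^sub>s \<tau>) t = tsubst \<tau> (tsubst \<sigma> t)"
  by (induction t) (auto simp: scomp_def)

lemma asubst_scomp: "asubst (\<sigma> \<circ>\<^sub>s \<tau>) A = asubst \<tau> (asubst \<sigma> A)"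
  by (cases A) (auto simp: tsubst_scomp)

lemma gsubst_scomp: "gsubst (\<sigma> \<circ>\<^sub>s \<tau>) B = gsubst \<tau> (gsubst \<sigma> B)"
  by (auto simp: gsubst_def asubst_scomp)

lemma tsubst_cong: "(\<And>x. x \<in> tvars t \<Longrightarrow> \<sigma> x = \<tau> x) \<Longrightarrow> tsubst \<sigma> t = tsubst \<tau> t"
  by (induction t) auto

lemma asubst_cong: "(\<And>x. x \<in> avars A \<Longrightarrow> \<sigma> x = \<tau> x) \<Longrightarrow> asubst \<sigma> A = asubst \<tau> A"
  by (cases A) (auto intro: tsubst_cong)

lemma gsubst_cong: "(\<And>x. x \<in> gvars B \<Longrightarrow> \<sigma> x = \<tau> x) \<Longrightarrow> gsubst \<sigma> B = gsubst \<tau> B"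
  unfolding gsubst_def gvars_def by (auto intro!: asubst_cong)

lemma tsubst_Var [simp]: "tsubst Var t = t"
  by (induction t) (auto simp: map_idI)

lemma asubst_Var [simp]: "asubst Var A = A"
  by (cases A) (auto simp: map_idI)

lemma gsubst_Var [simp]: "gsubst Var B = B"
  by (simp add: gsubst_def map_idI)

lemma gsubst_Nil [simp]: "gsubst \<sigma> [] = []"
  by (simp add: gsubst_def)

lemma gsubst_Cons [simp]: "gsubst \<sigma> (A # B) = asubst \<sigma> A # gsubst \<sigma> B"
  by (simp add: gsubst_def)

lemma gsubst_append [simp]: "gsubst \<sigma> (B @ B') = gsubst \<sigma> B @ gsubst \<sigma> B'"
  by (simp add: gsubst_def)

lemma gvars_Cons [simp]: "gvars (A # B) = avars A \<union> gvars B"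
  by (simp add: gvars_def)

lemma tvars_tsubst_subset: "tvars (tsubst \<sigma> t) \<subseteq> svars \<sigma> \<union> tvars t"
proof (induction t)
  case (Var x)
  then show ?case by (cases "\<sigma> x = Var x") (auto simp: svars_def sdom_def)
qed fastforce

lemma avars_asubst_subset: "avars (asubst \<sigma> A) \<subseteq> svars \<sigma> \<union> avars A"
  using tvars_tsubst_subset by (cases A) fastforce+

lemma distinct_Var_list_matches:
  fixes xs :: "'v list" and ts :: "('f, 'v) trm list"
  assumes "distinct xs" and "length xs = length ts"
  shows "\<exists>\<tau>. map \<tau> xs = ts"
proof
  define \<tau> where "\<tau> x = (case map_of (zip xs ts) x of Some t \<Rightarrow> t | None \<Rightarrow> Var x)" for x
  show "map \<tau> xs = ts"
    by (rule nth_equalityI) (simp_all add: assms \<tau>_def map_of_zip_nth)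
qed

lemma mgu_lifting:
  assumes "is_mgu \<sigma> A H" and "is_mgu \<sigma>' A' H"
    and "asubst \<tau> A' = A" and "asubst \<tau> H = H"
  shows "\<exists>\<gamma>. \<tau> \<circ>\<^sub>s \<sigma> = \<sigma>' \<circ>\<^sub>s \<gamma>"
proof -
  have "asubst (\<tau> \<circ>\<^sub>s \<sigma>) A' = asubst (\<tau> \<circ>\<^sub>s \<sigma>) H"
    using assms(1,3,4) by (simp add: asubst_scomp is_mgu_def unifier_def)
  then show ?thesis
    using assms(2) by (auto simp: is_mgu_def unifier_def)
qed

text \<open>X and T stand for p(X1,...,Xn) and p(t1,...,tn). The freshness conjunct records that
  the clause selected at a choice step avoids the variables of the symbolic side.\<close>
fun items_related ::
  "('p, 'f, 'v) atm \<Rightarrow> ('p, 'f, 'v) atm \<Rightarrow> ('l, 'p, 'f, 'v) gitem \<Rightarrow> ('l, 'p, 'f, 'v) gitem \<Rightarrow> bool"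
where
  "items_related X T (G B \<delta> c) (G D \<theta> c') \<longleftrightarrow> c = c'
     \<and> (\<exists>\<tau>. gsubst \<tau> D = B \<and> asubst \<tau> (asubst \<theta> X) = asubst \<delta> T)
     \<and> (\<forall>d. c = Some d \<longrightarrow> clvars d \<inter> (gvars D \<union> avars (asubst \<theta> X)) = {})"
| "items_related X T (Succ _) (Succ _) \<longleftrightarrow> True"
| "items_related X T (FailF _) (FailF _) \<longleftrightarrow> True"
| "items_related X T _ _ \<longleftrightarrow> False"

definition states_related :: "('p, 'f, 'v) atm \<Rightarrow> ('p, 'f, 'v) atm \<Rightarrow> ('l, 'p, 'f, 'v) cstate \<Rightarrow> bool"
  where "states_related X T C \<longleftrightarrow> list_all2 (items_related X T) (fst C) (snd C)"

lemma items_related_choice: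
  assumes "items_related X T (G B \<delta> None) (G D \<theta> None)"
    and "clvars d \<inter> V = {}" and "gvars D \<union> avars (asubst \<theta> X) \<subseteq> V"
  shows "items_related X T (G B \<delta> (Some d)) (G D \<theta> (Some d))"
  using assms by auto

lemma items_related_unfold:
  assumes related: "items_related X T (G (A # B) \<delta> (Some c)) (G (A' # B') \<theta> (Some c))"
    and mgu: "is_mgu \<sigma> A (cl_head c)" and mgu': "is_mgu \<sigma>' A' (cl_head c)"
  shows "items_related X T (G (gsubst \<sigma> (cl_body c @ B)) (\<delta> \<circ>\<^sub>s \<sigma>) None)
                           (G (gsubst \<sigma>' (cl_body c @ B')) (\<theta> \<circ>\<^sub>s \<sigma>') None)"
proof -
  from related obtain \<tau> where
    goal: "gsubst \<tau> (A' # B') = A # B" and query: "asubst \<tau> (asubst \<theta> X) = asubst \<delta> T"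
    and fresh: "clvars c \<inter> (gvars (A' # B') \<union> avars (asubst \<theta> X)) = {}"
    by auto
  define \<tau>' where "\<tau>' x = (if x \<in> clvars c then Var x else \<tau> x)" for x
  have agree: "\<tau>' x = \<tau> x" if "x \<in> gvars (A' # B') \<union> avars (asubst \<theta> X)" for x
    using that fresh by (auto simp: \<tau>'_def)
  have "gsubst \<tau>' (A' # B') = A # B"
    using goal gsubst_cong[of "A' # B'" \<tau>' \<tau>] agree by auto
  then have goal': "asubst \<tau>' A' = A" "gsubst \<tau>' B' = B"
    by simp_all
  have query': "asubst \<tau>' (asubst \<theta> X) = asubst \<delta> T"
    using query asubst_cong[of "asubst \<theta> X" \<tau>' \<tau>] agree by auto
  have head: "asubst \<tau>' (cl_head c) = cl_head c"
    using asubst_cong[of "cl_head c" \<tau>' Var] by (auto simp: \<tau>'_def cl_head_def clvars_def map_idI)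
  have body: "gsubst \<tau>' (cl_body c) = cl_body c"
    using gsubst_cong[of "cl_body c" \<tau>' Var] by (auto simp: \<tau>'_def clvars_def)
  obtain \<gamma> where factor: "\<tau>' \<circ>\<^sub>s \<sigma> = \<sigma>' \<circ>\<^sub>s \<gamma>"
    using mgu_lifting[OF mgu mgu' goal'(1) head] by blast
  have "gsubst \<gamma> (gsubst \<sigma>' (cl_body c @ B')) = gsubst \<sigma> (gsubst \<tau>' (cl_body c @ B'))"
    by (simp only: gsubst_scomp[symmetric] factor)
  also have "\<dots> = gsubst \<sigma> (cl_body c @ B)"
    using body goal'(2) by simp
  finally have "gsubst \<gamma> (gsubst \<sigma>' (cl_body c @ B')) = gsubst \<sigma> (cl_body c @ B)" .
  moreover have "asubst \<gamma> (asubst (\<theta> \<circ>\<^sub>s \<sigma>') X) = asubst (\<delta> \<circ>\<^sub>s \<sigma>) T"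
    by (simp only: asubst_scomp asubst_scomp[of \<sigma>' \<gamma>, symmetric] factor[symmetric] query')
  ultimately show ?thesis by auto
qed

lemma cstep_states_related:
  assumes "cstep P V C C'" and "states_related X T C" and "st_vars C \<union> avars X \<subseteq> V"
  shows "states_related X T C'"
  using assms unfolding states_related_def
proof (induction rule: cstep.induct)
  case (choice A p ts cs B \<delta> S A' B' \<theta> S')
  from choice.hyps(2) obtain ds where
    "\<forall>d \<in> set ds. clvars d \<inter> V = {}" and "cs = filter (\<lambda>d. unifiable A (cl_head d)) ds"
    unfolding clauses_of_def by blast
  moreover have "gvars (A' # B') \<union> avars (asubst \<theta> X) \<subseteq> V"
    using choice.prems(2) avars_asubst_subset[of \<theta> X] by (auto simp: st_vars_def)
  ultimately have "\<forall>d \<in> set cs. items_related X T (G (A # B) \<delta> (Some d)) (G (A' # B') \<theta> (Some d))"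
    using choice.prems(1) items_related_choice by fastforce
  then have "list_all2 (items_related X T)
      (map (\<lambda>d. G (A # B) \<delta> (Some d)) cs) (map (\<lambda>d. G (A' # B') \<theta> (Some d)) cs)"
    by (simp add: list_all2_map1 list_all2_map2 list_all2_same)
  then show ?case
    using choice.prems(1) by (simp add: list_all2_appendI)
next
  case (unfold \<sigma> A c \<sigma>' A' B \<delta> S B' \<theta> S')
  then show ?case
    by (simp only: fst_conv snd_conv list_all2_Cons) (blast intro: items_related_unfold)
qed auto

lemma cexec_invariant:
  assumes exec: "cexec P V0 Cs" and "i < length Cs" and init: "I (Cs ! 0)"
    and step: "\<And>V C C'. cstep P V C C' \<Longrightarrow> st_vars C \<union> V0 \<subseteq> V \<Longrightarrow> I C \<Longrightarrow> I C'"
  shows "I (Cs ! i)"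
  using \<open>i < length Cs\<close>
proof (induction i)
  case (Suc i)
  have "cstep P (V0 \<union> (\<Union>j \<le> i. st_vars (Cs ! j))) (Cs ! i) (Cs ! Suc i)"
    using exec Suc.prems by (simp add: cexec_def)
  then show ?case
    by (rule step) (use Suc in auto)
qed (rule init)

theorem theorem1:
  fixes P :: "('l, 'p, 'f, 'v) prog"
    and p :: 'p and ts :: "('f, 'v) trm list" and xs :: "'v list"
    and Cs :: "('l, 'p, 'f, 'v) cstate list"
  assumes "distinct (map lbl P)"
    and "length xs = length ts"
    and "distinct xs"
    and "set xs \<inter> avars (Atm p ts) = {}"
    and "cexec P (avars (Atm p ts) \<union> set xs) Cs"
    and "Cs ! 0 = init_state p ts xs"
  shows "\<forall>i < length Cs. \<forall>B \<delta> c S D \<theta> c' S'.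
           Cs ! i = (G B \<delta> c # S, G D \<theta> c' # S') \<longrightarrow>
             length S = length S'
           \<and> goal_more_general D B
           \<and> c = c'
           \<and> atm_more_general (asubst \<theta> (Atm p (map Var xs))) (asubst \<delta> (Atm p ts))"
proof (intro allI impI)
  let ?X = "Atm p (map Var xs)" and ?T = "Atm p ts"
  fix i B \<delta> c S D \<theta> c' S'
  assume "i < length Cs" and state: "Cs ! i = (G B \<delta> c # S, G D \<theta> c' # S')"
  obtain \<tau> where "map \<tau> xs = ts"
    using distinct_Var_list_matches[OF assms(3,2)] by blast
  then have "asubst \<tau> ?X = ?T"
    by (simp add: comp_def)
  then have init: "states_related ?X ?T (Cs ! 0)"
    using assms(6) unfolding states_related_def init_state_def
    by (simp del: asubst.simps) blast
  have "states_related ?X ?T (Cs ! i)"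
  proof (rule cexec_invariant[where I = "states_related ?X ?T", OF assms(5) \<open>i < length Cs\<close> init])
    fix V C C'
    assume "cstep P V C C'" and "st_vars C \<union> (avars ?T \<union> set xs) \<subseteq> V"
      and "states_related ?X ?T C"
    then show "states_related ?X ?T C'"
      using cstep_states_related[of P V C C' ?X ?T] by auto
  qed
  then show "length S = length S' \<and> goal_more_general D B \<and> c = c'
      \<and> atm_more_general (asubst \<theta> ?X) (asubst \<delta> ?T)"
    using state unfolding states_related_def goal_more_general_def atm_more_general_def
    by (auto dest: list_all2_lengthD)
qed

end
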